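(* The matroid $V_{10}/5$ (which is isomorphic to $V_{10}/7$) has the half-plane property; equivalently, the polynomial $\frac{\partial f_{10}}{\partial x_5}$ is stable.
   Context: $V_{10}$ is the matroid on $\{1,\dots,10\}$ whose bases are all $4$-element subsets of $\{1,\dots,10\}$ except $\{1,2,3,4\},\{1,2,5,6\},\{1,2,7,8\},\{1,2,9,10\},\{3,4,5,6\},\{5,6,7,8\},\{7,8,9,10\}$, and $f_{10}=\sum_{B}\prod_{i\in B}x_i$ (sum over bases $B$ of $V_{10}$) is its basis generating polynomial. For a matroid $M$ and element $e$, the contraction $M/e$ has as bases the sets $B\setminus\{e\}$ for bases $B$ of $M$ containing $e$; its basis generating polynomial is the partial derivative with respect to $x_e$ of that of $M$. A homogeneous real polynomial $f$ is stable if for all vectors $v$ with all entries positive and all real vectors $w$, $f(tv+w)\in\mathbb{R}[t]$ has only real roots; a matroid has the half-plane property if its basis generating polynomial is stable. *)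

theory Defs
  imports Complex_Main
begin

definition V10_bases :: "nat set set" where
  "V10_bases = {B. B \<subseteq> {1..10} \<and> card B = 4}
     - {{1,2,3,4}, {1,2,5,6}, {1,2,7,8}, {1,2,9,10}, {3,4,5,6}, {5,6,7,8}, {7,8,9,10}}"

definition contract_bases :: "nat set set \<Rightarrow> nat \<Rightarrow> nat set set" where
  "contract_bases Bs e = {B - {e} | B. B \<in> Bs \<and> e \<in> B}"

definition basis_gen_poly :: "nat set set \<Rightarrow> (nat \<Rightarrow> complex) \<Rightarrow> complex" where
  "basis_gen_poly Bs x = (\<Sum>B\<in>Bs. \<Prod>i\<in>B. x i)"

definition stable_on :: "nat set \<Rightarrow> ((nat \<Rightarrow> complex) \<Rightarrow> complex) \<Rightarrow> bool" where
  "stable_on E f \<longleftrightarrow>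
     (\<forall>v w :: nat \<Rightarrow> real. (\<forall>i\<in>E. v i > 0) \<longrightarrow>
        (\<forall>t :: complex. f (\<lambda>i. t * complex_of_real (v i) + complex_of_real (w i)) = 0
            \<longrightarrow> t \<in> \<real>))"

definition half_plane_property :: "nat set \<Rightarrow> nat set set \<Rightarrow> bool" where
  "half_plane_property E Bs \<longleftrightarrow> stable_on E (basis_gen_poly Bs)"

end

theory Submission
  imports Defs "HOL-Computational_Algebra.Fundamental_Theorem_Algebra"
begin

(* The basis generating polynomial of V10/5 is
     g = e_3(z_i : i ~= 5) - z_6 (z_1 z_2 + z_3 z_4 + z_7 z_8).
   It has real coefficients, so stability amounts to g(z) ~= 0 whenever every z_i lies in the
   open upper half-plane. Fix such z and split {1,...,10} - {5,6} into the blocks {1,2}, {3,4},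
   {7,8}, {9}, {10}; for a block B let gamma_B be the sum and beta_B the difference of its
   variables (beta_B = z_i for a singleton {i}). The polynomial
     F(t) = prod_B (t + gamma_B) * (t + 4 z_6 + sum_B gamma_B - sum_B beta_B^2 / (t + gamma_B))
   has no zeros with Im t >= 0, because gamma_B^2 - beta_B^2 = 4 z_a z_b (or 0) makes each
   gamma_B - beta_B^2 / (t + gamma_B) land in the closed upper half-plane. By Gauss-Lucas the
   derivatives of F inherit this, so every coefficient of F below the leading one is nonzero;
   and the coefficient of t^3 is 4 g(z). *)

lemma basis_gen_poly_cnj: "basis_gen_poly Bs (\<lambda>i. cnj (z i)) = cnj (basis_gen_poly Bs z)"
  by (simp add: basis_gen_poly_def)

lemma half_plane_propertyI:
  assumes nonvanishing: "\<And>z. \<forall>i\<in>E. 0 < Im (z i) \<Longrightarrow> basis_gen_poly Bs z \<noteq> 0"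
  shows "half_plane_property E Bs"
  unfolding half_plane_property_def stable_on_def
proof (intro allI impI)
  fix v w :: "nat \<Rightarrow> real" and t :: complex
  assume v: "\<forall>i\<in>E. 0 < v i"
  define z where "z = (\<lambda>s i. s * complex_of_real (v i) + complex_of_real (w i))"
  assume "basis_gen_poly Bs (z t) = 0"
  then have root: "basis_gen_poly Bs (z (cnj t)) = 0"
    using basis_gen_poly_cnj[of Bs "z t"] by (simp add: z_def)
  show "t \<in> \<real>"
  proof (rule ccontr)
    assume "t \<notin> \<real>"
    then have "Im t \<noteq> 0" by (simp add: complex_is_Real_iff)
    then consider "0 < Im t" | "0 < Im (cnj t)" by fastforce
    then show False
    proof cases
      case 1
      then show False
        using nonvanishing[of "z t"] v \<open>basis_gen_poly Bs (z t) = 0\<close> by (simp add: z_def)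
    next
      case 2
      then show False
        using nonvanishing[of "z (cnj t)"] v root by (simp add: z_def mult_neg_pos)
    qed
  qed
qed

lemma contract_bases_empty [simp]: "contract_bases {} e = {}"
  by (simp add: contract_bases_def)

lemma contract_bases_insert [simp]:
  "contract_bases (insert B Bs) e =
     (if e \<in> B then insert (B - {e}) (contract_bases Bs e) else contract_bases Bs e)"
  by (auto simp: contract_bases_def)

lemma contract_bases_uniform_diff:
  assumes "finite E" "e \<in> E"
  shows "contract_bases ({B. B \<subseteq> E \<and> card B = Suc k} - D) e =
    {S. S \<subseteq> E - {e} \<and> card S = k} - contract_bases D e"
proof (intro set_eqI iffI)
  fix S assume "S \<in> contract_bases ({B. B \<subseteq> E \<and> card B = Suc k} - D) e"
  then obtain B where B: "S = B - {e}" "B \<subseteq> E" "card B = Suc k" "B \<notin> D" "e \<in> B"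
    by (auto simp: contract_bases_def)
  then have "finite B" using assms(1) finite_subset by blast
  moreover have "B' = B" if "B' \<in> D" "e \<in> B'" "S = B' - {e}" for B'
    using that B by blast
  ultimately show "S \<in> {S. S \<subseteq> E - {e} \<and> card S = k} - contract_bases D e"
    using B by (auto simp: contract_bases_def)
next
  fix S assume S: "S \<in> {S. S \<subseteq> E - {e} \<and> card S = k} - contract_bases D e"
  then have "finite S" using assms(1) finite_subset by auto
  moreover have "insert e S \<notin> D" "S = insert e S - {e}"
    using S by (auto simp: contract_bases_def)
  ultimately show "S \<in> contract_bases ({B. B \<subseteq> E \<and> card B = Suc k} - D) e"
    using S assms(2) unfolding contract_bases_def by (intro CollectI exI[of _ "insert e S"]) auto
qed

lemma contract_V10_bases_5:
  "contract_bases V10_bases 5 =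
     {S. S \<subseteq> {1..10} - {5} \<and> card S = 3} - {{1,2,6}, {3,4,6}, {6,7,8}}"
  using contract_bases_uniform_diff[of "{1..10::nat}" 5 3]
  by (simp add: V10_bases_def numeral_eq_Suc insert_Diff_if)

definition esym :: "('a \<Rightarrow> 'b::comm_semiring_1) \<Rightarrow> 'a set \<Rightarrow> nat \<Rightarrow> 'b" where
  "esym x A k = (\<Sum>S | S \<subseteq> A \<and> card S = k. \<Prod>i\<in>S. x i)"

lemma esym_eq_sum_Pow:
  assumes "finite A"
  shows "esym x A k = (\<Sum>S\<in>Pow A. if card S = k then prod x S else 0)"
proof -
  have "{S. S \<subseteq> A \<and> card S = k} = {S \<in> Pow A. card S = k}" by auto
  then have "esym x A k = (\<Sum>S \<in> {S \<in> Pow A. card S = k}. prod x S)"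
    by (simp add: esym_def)
  also have "\<dots> = (\<Sum>S\<in>Pow A. if card S = k then prod x S else 0)"
    using assms by (intro sum.inter_filter) simp
  finally show ?thesis .
qed

lemma esym_0 [simp]: "finite A \<Longrightarrow> esym x A 0 = 1"
  by (simp add: esym_eq_sum_Pow finite_subset[of _ A] card_0_eq cong: if_cong)

lemma esym_empty [simp]: "0 < k \<Longrightarrow> esym x {} k = 0"
  by (simp add: esym_eq_sum_Pow)

(* Stated with k - 1 instead of Suc so that simp unfolds esym at numerals. *)
lemma esym_insert [simp]:
  assumes "finite A" "a \<notin> A" "0 < k"
  shows "esym x (insert a A) k = esym x A k + x a * esym x A (k - 1)"
proof -
  let ?f = "\<lambda>S. if card S = k then prod x S else 0"
  have inj: "inj_on (insert a) (Pow A)"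
    using assms(2) by (intro inj_onI) (metis Pow_iff insert_ident subsetD)
  have insert_S: "?f (insert a S) = x a * (if card S = k - 1 then prod x S else 0)"
    if "S \<in> Pow A" for S
  proof -
    have "finite S" "a \<notin> S" using that assms(1,2) finite_subset by auto
    then show ?thesis using assms(3) by auto
  qed
  have "esym x (insert a A) k = sum ?f (Pow A) + sum ?f (insert a ` Pow A)"
    unfolding esym_eq_sum_Pow[OF finite_insert[THEN iffD2, OF assms(1)]] Pow_insert
    using assms(1,2) by (intro sum.union_disjoint) auto
  also have "sum ?f (insert a ` Pow A) = x a * esym x A (k - 1)"
    by (simp add: sum.reindex[OF inj] insert_S esym_eq_sum_Pow[OF assms(1)] sum_distrib_left)
  finally show ?thesis by (simp add: esym_eq_sum_Pow[OF assms(1), of x k])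
qed

lemma basis_gen_poly_diff:
  "finite Bs \<Longrightarrow> Cs \<subseteq> Bs \<Longrightarrow>
     basis_gen_poly (Bs - Cs) x = basis_gen_poly Bs x - basis_gen_poly Cs x"
  by (simp add: basis_gen_poly_def sum_diff)

lemma basis_gen_poly_uniform: "basis_gen_poly {S. S \<subseteq> A \<and> card S = k} z = esym z A k"
  by (simp add: basis_gen_poly_def esym_def)

lemma basis_gen_poly_contract_V10_5:
  "basis_gen_poly (contract_bases V10_bases 5) z =
     esym z {1,2,3,4,6,7,8,9,10} 3 - (z 1 * z 2 * z 6 + z 3 * z 4 * z 6 + z 6 * z 7 * z 8)"
proof -
  have E: "{1..10} - {5} = {1,2,3,4,6,7,8,9,10::nat}" by (auto; presburger)
  have "finite {S. S \<subseteq> {1,2,3,4,6,7,8,9,10::nat} \<and> card S = 3}" by simp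
  moreover have
    "{{1,2,6}, {3,4,6}, {6,7,8}} \<subseteq> {S. S \<subseteq> {1,2,3,4,6,7,8,9,10::nat} \<and> card S = 3}"
    by auto
  moreover have "{1,2,6::nat} \<notin> {{3,4,6}, {6,7,8}}" "{3,4,6::nat} \<noteq> {6,7,8}"
    by (simp_all add: set_eq_iff) presburger+
  ultimately show ?thesis
    unfolding contract_V10_bases_5 E
    by (simp add: basis_gen_poly_diff basis_gen_poly_uniform)
      (simp add: basis_gen_poly_def algebra_simps)
qed

lemma Im_one_divide_neg:
  fixes w :: complex
  assumes "0 < Im w"
  shows "Im (1 / w) < 0"
proof -
  have "0 < (Re w)\<^sup>2 + (Im w)\<^sup>2" using assms by (simp add: add_nonneg_pos)
  then show ?thesis using assms by (simp add: Im_divide divide_neg_pos)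
qed

lemma logderiv_linear_factor:
  fixes q :: "complex poly"
  assumes "z \<noteq> r" "poly q z \<noteq> 0"
  shows "poly (pderiv ([:-r, 1:] * q)) z / poly ([:-r, 1:] * q) z =
    1 / (z - r) + poly (pderiv q) z / poly q z"
proof -
  have "poly (pderiv ([:-r, 1:] * q)) z = (z - r) * poly (pderiv q) z + poly q z"
    unfolding pderiv_mult by (simp add: pderiv_pCons algebra_simps)
  moreover have "poly ([:-r, 1:] * q) z = (z - r) * poly q z"
    by (simp add: algebra_simps)
  ultimately show ?thesis
    using assms by (simp add: field_simps)
qed

lemma Im_logderiv_neg:
  fixes p :: "complex poly"
  assumes "0 < degree p" and "\<And>r. poly p r = 0 \<Longrightarrow> Im r < 0" and "0 \<le> Im z"
  shows "Im (poly (pderiv p) z / poly p z) < 0"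
  using assms(1,2)
proof (induction "degree p" arbitrary: p rule: less_induct)
  case less
  have "\<not> constant (poly p)" using less.prems(1) by (simp add: constant_degree)
  then obtain r where "poly p r = 0" using fundamental_theorem_of_algebra by blast
  then obtain q where p: "p = [:-r, 1:] * q" by (metis dvdE poly_eq_0_iff_dvd)
  have "q \<noteq> 0" using less.prems(1) p by auto
  then have deg: "degree p = Suc (degree q)" unfolding p by (subst degree_mult_eq) auto
  have "0 < Im (z - r)" using less.prems(2)[OF \<open>poly p r = 0\<close>] assms(3) by simp
  have q_roots: "Im s < 0" if "poly q s = 0" for s
    using less.prems(2)[of s] that unfolding p by simp
  then have "poly q z \<noteq> 0" using assms(3) by (metis not_le)
  have "Im (poly (pderiv q) z / poly q z) \<le> 0"
  proof (cases "degree q = 0")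
    case True
    then have "pderiv q = 0" by (simp add: pderiv_eq_0_iff)
    then show ?thesis by simp
  next
    case False
    then have "Im (poly (pderiv q) z / poly q z) < 0"
      using less.hyps[OF _ _ q_roots] deg by simp
    then show ?thesis by simp
  qed
  moreover have "z \<noteq> r" using \<open>0 < Im (z - r)\<close> by auto
  ultimately show ?case
    using Im_one_divide_neg[OF \<open>0 < Im (z - r)\<close>]
    unfolding p logderiv_linear_factor[OF \<open>z \<noteq> r\<close> \<open>poly q z \<noteq> 0\<close>] by simp
qed

lemma poly_pderiv_nonzero_upper_half_plane:
  fixes p :: "complex poly"
  assumes "0 < degree p" and "\<And>z. 0 \<le> Im z \<Longrightarrow> poly p z \<noteq> 0" and "0 \<le> Im z"
  shows "poly (pderiv p) z \<noteq> 0"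
proof -
  have "Im r < 0" if "poly p r = 0" for r
    using assms(2)[of r] that by (meson not_le)
  then have "Im (poly (pderiv p) z / poly p z) < 0"
    using Im_logderiv_neg assms(1,3) by blast
  then show ?thesis by auto
qed

lemma poly_higher_pderiv_nonzero_upper_half_plane:
  fixes p :: "complex poly"
  assumes "k < degree p" and "\<And>z. 0 \<le> Im z \<Longrightarrow> poly p z \<noteq> 0" and "0 \<le> Im z"
  shows "poly ((pderiv ^^ k) p) z \<noteq> 0"
  using assms(1,3)
proof (induction k arbitrary: z)
  case 0
  then show ?case using assms(2) by simp
next
  case (Suc k)
  have "degree ((pderiv ^^ k) p) = degree p - k"
    by (induction k) (simp_all add: degree_pderiv)
  then show ?case
    using Suc by (simp, intro poly_pderiv_nonzero_upper_half_plane) auto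
qed

lemma coeff_nonzero_if_no_upper_half_plane_roots:
  fixes p :: "complex poly"
  assumes "k < degree p" and "\<And>z. 0 \<le> Im z \<Longrightarrow> poly p z \<noteq> 0"
  shows "coeff p k \<noteq> 0"
proof -
  have "poly ((pderiv ^^ k) p) 0 = fact k * coeff p k"
    by (simp add: poly_0_coeff_0 coeff_higher_pderiv pochhammer_fact)
  then show ?thesis
    using poly_higher_pderiv_nonzero_upper_half_plane[OF assms, of 0] by auto
qed

(* det (t I + M) for the arrow matrix M with corner a, diagonal entries g j and arm entries
   beta j, where c j = (beta j)^2. *)
definition arrow_poly ::
  "complex \<Rightarrow> ('a \<Rightarrow> complex) \<Rightarrow> ('a \<Rightarrow> complex) \<Rightarrow> 'a set \<Rightarrow> complex poly" where
  "arrow_poly a g c J =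
     [:a, 1:] * (\<Prod>j\<in>J. [:g j, 1:]) - (\<Sum>j\<in>J. smult (c j) (\<Prod>k\<in>J - {j}. [:g k, 1:]))"

lemma poly_arrow_poly:
  assumes "finite J" and "\<And>j. j \<in> J \<Longrightarrow> t + g j \<noteq> 0"
  shows "poly (arrow_poly a g c J) t =
    (\<Prod>j\<in>J. t + g j) * (t + a - (\<Sum>j\<in>J. c j / (t + g j)))"
proof -
  have remove: "c j * (\<Prod>k\<in>J - {j}. t + g k) = (\<Prod>k\<in>J. t + g k) * (c j / (t + g j))"
    if "j \<in> J" for j
    using prod.remove[OF assms(1) that, of "\<lambda>k. t + g k"] assms(2)[OF that] by simp
  have "poly (arrow_poly a g c J) t =
      (t + a) * (\<Prod>j\<in>J. t + g j) - (\<Sum>j\<in>J. c j * (\<Prod>k\<in>J - {j}. t + g k))"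
    by (simp add: arrow_poly_def poly_prod poly_sum algebra_simps)
  also have "(\<Sum>j\<in>J. c j * (\<Prod>k\<in>J - {j}. t + g k)) =
      (\<Prod>j\<in>J. t + g j) * (\<Sum>j\<in>J. c j / (t + g j))"
    unfolding sum_distrib_left using remove by (rule sum.cong[OF refl])
  finally show ?thesis by (simp add: algebra_simps)
qed

lemma arrow_poly_nonzero:
  assumes "finite J" and "0 \<le> Im t" and "\<And>j. j \<in> J \<Longrightarrow> 0 < Im (g j)"
    and "0 < Im (a - (\<Sum>j\<in>J. g j))" and "\<And>j. j \<in> J \<Longrightarrow> 0 \<le> Im (g j - c j / (t + g j))"
  shows "poly (arrow_poly a g c J) t \<noteq> 0"
proof -
  have nz: "t + g j \<noteq> 0" if "j \<in> J" for j
    using assms(2) assms(3)[OF that] by (auto simp: complex_eq_iff)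
  have "t + a - (\<Sum>j\<in>J. c j / (t + g j)) =
      t + (a - (\<Sum>j\<in>J. g j)) + (\<Sum>j\<in>J. g j - c j / (t + g j))"
    by (simp add: sum_subtractf)
  moreover have "0 \<le> Im (\<Sum>j\<in>J. g j - c j / (t + g j))"
    using assms(5) by (simp add: sum_nonneg)
  ultimately have "0 < Im (t + a - (\<Sum>j\<in>J. c j / (t + g j)))"
    using assms(2,4) by (simp add: sum_subtractf)
  then have "t + a - (\<Sum>j\<in>J. c j / (t + g j)) \<noteq> 0"
    by (metis less_irrefl zero_complex.sel(2))
  moreover have "(\<Prod>j\<in>J. t + g j) \<noteq> 0" using assms(1) nz by simp
  ultimately show ?thesis by (simp add: poly_arrow_poly[OF assms(1) nz])
qed

lemma Im_divide_nonneg: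
  fixes x y :: complex
  assumes "0 \<le> Im (x * cnj y)"
  shows "0 \<le> Im (x / y)"
  using assms by (simp add: Im_divide')

lemma Im_pair_term_nonneg:
  fixes a b t :: complex
  assumes "0 \<le> Im a" "0 \<le> Im b" "0 \<le> Im t"
  shows "0 \<le> Im (a + b - (a - b)\<^sup>2 / (t + a + b))"
proof (cases "t + a + b = 0")
  case True
  then show ?thesis using assms by simp
next
  case False
  have "Im (((a + b) * t + 4 * a * b) * cnj (t + a + b)) =
      Im a * (cmod (2 * b + t))\<^sup>2 + Im b * (cmod (2 * a + t))\<^sup>2 + Im t * (cmod (a - b))\<^sup>2"
    by (simp only: cmod_power2) (simp add: power2_eq_square, algebra)
  then have "0 \<le> Im (((a + b) * t + 4 * a * b) / (t + a + b))"
    using assms by (intro Im_divide_nonneg) simp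
  moreover have "a + b - (a - b)\<^sup>2 / (t + a + b) = ((a + b) * t + 4 * a * b) / (t + a + b)"
    using False by (simp add: field_simps power2_eq_square)
  ultimately show ?thesis by simp
qed

(* The blocks {1,2}, {3,4}, {7,8}, {9}, {10} are indexed by their least elements; the second
   variable of block j is block_partner z j, and 0 for a singleton. *)
definition block_partner :: "(nat \<Rightarrow> complex) \<Rightarrow> nat \<Rightarrow> complex" where
  "block_partner z j = (if j \<in> {1, 3, 7} then z (j + 1) else 0)"

definition V10_5_arrow_poly :: "(nat \<Rightarrow> complex) \<Rightarrow> complex poly" where
  "V10_5_arrow_poly z =
     arrow_poly (4 * z 6 + (\<Sum>j\<in>{1, 3, 7, 9, 10}. z j + block_partner z j))
       (\<lambda>j. z j + block_partner z j) (\<lambda>j. (z j - block_partner z j)\<^sup>2) {1, 3, 7, 9, 10}"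

lemma coeff_V10_5_arrow_poly_3:
  "coeff (V10_5_arrow_poly z) 3 = 4 * basis_gen_poly (contract_bases V10_bases 5) z"
  unfolding basis_gen_poly_contract_V10_5 V10_5_arrow_poly_def arrow_poly_def block_partner_def
  by (simp add: coeff_mult numeral_eq_Suc insert_Diff_if) algebra

lemma degree_V10_5_arrow_poly: "6 \<le> degree (V10_5_arrow_poly z)"
proof (rule le_degree)
  show "coeff (V10_5_arrow_poly z) 6 \<noteq> 0"
    unfolding V10_5_arrow_poly_def arrow_poly_def
    by (simp add: coeff_mult numeral_eq_Suc insert_Diff_if)
qed

lemma poly_V10_5_arrow_poly_nonzero:
  assumes z: "\<forall>i\<in>{1..10} - {5}. 0 < Im (z i)" and t: "0 \<le> Im t"
  shows "poly (V10_5_arrow_poly z) t \<noteq> 0"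
  unfolding V10_5_arrow_poly_def
proof (rule arrow_poly_nonzero)
  have pos: "0 < Im (z i)" if "i \<in> {1, 2, 3, 4, 6, 7, 8, 9, 10}" for i
    using z that by auto
  have partner: "0 \<le> Im (block_partner z j)" for j
    using pos[of 2] pos[of 4] pos[of 8] by (auto simp: block_partner_def numeral_2_eq_2)
  show "0 < Im (z j + block_partner z j)" if "j \<in> {1, 3, 7, 9, 10}" for j
  proof -
    have "0 < Im (z j)" using pos that by auto
    then show ?thesis using partner[of j] by simp
  qed
  show "0 \<le> Im (z j + block_partner z j -
      (z j - block_partner z j)\<^sup>2 / (t + (z j + block_partner z j)))"
    if "j \<in> {1, 3, 7, 9, 10}" for j
  proof -
    have "0 < Im (z j)" using pos that by auto
    then show ?thesis
      using Im_pair_term_nonneg[of "z j" "block_partner z j" t] partner[of j] t by (simp add: add.assoc)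
  qed
  show "0 < Im (4 * z 6 + (\<Sum>j\<in>{1, 3, 7, 9, 10}. z j + block_partner z j)
      - (\<Sum>j\<in>{1, 3, 7, 9, 10}. z j + block_partner z j))"
    using pos[of 6] by simp
qed (use t in simp_all)

lemma basis_gen_poly_contract_V10_5_nonzero:
  assumes "\<forall>i\<in>{1..10} - {5}. 0 < Im (z i)"
  shows "basis_gen_poly (contract_bases V10_bases 5) z \<noteq> 0"
proof -
  have "coeff (V10_5_arrow_poly z) 3 \<noteq> 0"
    using degree_V10_5_arrow_poly[of z] poly_V10_5_arrow_poly_nonzero[OF assms]
    by (intro coeff_nonzero_if_no_upper_half_plane_roots) auto
  then show ?thesis by (simp add: coeff_V10_5_arrow_poly_3)
qed

theorem lemma4p3:
  shows "half_plane_property ({1..10} - {5}) (contract_bases V10_bases 5)"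
  by (rule half_plane_propertyI) (rule basis_gen_poly_contract_V10_5_nonzero)

end
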